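(* Let $\lambda\ge\Delta^{-1/2}$. For every $(p,g)\in\mathcal Z$, \[ \mu_{\min}\,\ell^\Theta_{\mathrm C,\infty}\bigl(p,\mathcal G(p)\bigr)\le d_\lambda\Bigl((p,g),\bigl(h^{(g)}_\mu(p),\bar r^\pi\bigr)\Bigr) \quad\text{and}\quad |g-\bar r^\pi|\le\lambda^{-1}d_\lambda\Bigl((p,g),\bigl(h^{(g)}_\mu(p),\bar r^\pi\bigr)\Bigr), \] where $\mu_{\min}:=\min_i\mu_i$.
   Context: Finite MDP with state set $\mathcal{S}=\{1,\dots,m\}$, finite action set, deterministic rewards in $[0,1]$, fixed policy inducing a transition matrix $P=(P_{ij})$ on $\mathcal S$ that is irreducible and aperiodic with stationary distribution $\mu$. $R_{ij}$ is the finite-valued $[0,1]$-valued random one-step reward conditioned on transition $i\to j$; gain $\bar r^\pi=\sum_i\mu_i\sum_jP_{ij}\mathbb E[R_{ij}]$; $\nu^{(g)}_{ij}:=\mathrm{Law}(R_{ij}-g)$. $\Theta=\{\theta_1<\dots<\theta_d\}$ with constant stride $\Delta>0$; $\Delta_d$ the probability simplex of $\mathbb R^d$; $\Delta_d^{\mathcal S}$ families $(p_i)_{i\in\mathcal S}$, $p_i\in\Delta_d$; $\mathcal Z:=\Delta_d^{\mathcal S}\times[0,1]$. For $u\in\Delta_d$, $\eta^{u,0}:=\sum_ku_k\delta_{\theta_k}$. Categorical projection $\Pi^\Theta_{\mathrm C}$: $\delta_x\mapsto\delta_{\theta_1}$ if $x\le\theta_1$, $\delta_{\theta_d}$ if $x\ge\theta_d$,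 $\frac{\theta_{k+1}-x}{\Delta}\delta_{\theta_k}+\frac{x-\theta_k}{\Delta}\delta_{\theta_{k+1}}$ if $\theta_k\le x\le\theta_{k+1}$, extended linearly to laws. $\mathcal G_g(p)$ is the unique $q\in\Delta_d^{\mathcal S}$ with $\eta^{q_i,0}=\Pi^\Theta_{\mathrm C}(\sum_jP_{ij}(\nu^{(g)}_{ij}\ast\eta^{p_j,0}))$ for all $i$; $\mathcal G:=\mathcal G_{\bar r^\pi}$. $h^{(g)}_\mu(p)_i:=(1-\mu_i)p_i+\mu_i\mathcal G_g(p)_i$. Coordinate Cramér metric: $F_u(\theta_k):=\sum_{j\le k}u_j$, $\ell^\Theta_{\mathrm C}(u,v)^2:=\Delta\sum_{k=1}^{d-1}(F_u(\theta_k)-F_v(\theta_k))^2$, $\ell^\Theta_{\mathrm C,\infty}(p,q):=\max_i\ell^\Theta_{\mathrm C}(p_i,q_i)$; $d_\lambda((p,g),(q,g')):=\ell^\Theta_{\mathrm C,\infty}(p,q)+\lambda|g-g'|$. *)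

theory Defs
  imports "HOL-Probability.Probability"
begin

text \<open>States are the elements of a finite type 's (playing the role of {1..m}).
  P i j is the transition probability i -> j.\<close>

definition stochastic_matrix :: "('s::finite \<Rightarrow> 's \<Rightarrow> real) \<Rightarrow> bool" where
  "stochastic_matrix P \<longleftrightarrow> (\<forall>i j. 0 \<le> P i j) \<and> (\<forall>i. (\<Sum>j\<in>UNIV. P i j) = 1)"

fun mpow :: "('s::finite \<Rightarrow> 's \<Rightarrow> real) \<Rightarrow> nat \<Rightarrow> 's \<Rightarrow> 's \<Rightarrow> real" where
  "mpow P 0 i j = (if i = j then 1 else 0)"
| "mpow P (Suc n) i j = (\<Sum>l\<in>UNIV. mpow P n i l * P l j)"

definition irreducible_matrix :: "('s::finite \<Rightarrow> 's \<Rightarrow> real) \<Rightarrow> bool" where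
  "irreducible_matrix P \<longleftrightarrow> (\<forall>i j. \<exists>n>0. mpow P n i j > 0)"

definition aperiodic_matrix :: "('s::finite \<Rightarrow> 's \<Rightarrow> real) \<Rightarrow> bool" where
  "aperiodic_matrix P \<longleftrightarrow> (\<forall>i. Gcd {n. n > 0 \<and> mpow P n i i > 0} = 1)"

definition stationary_dist :: "('s::finite \<Rightarrow> 's \<Rightarrow> real) \<Rightarrow> ('s \<Rightarrow> real) \<Rightarrow> bool" where
  "stationary_dist P mu \<longleftrightarrow> (\<forall>i. 0 \<le> mu i) \<and> (\<Sum>i\<in>UNIV. mu i) = 1
     \<and> (\<forall>j. (\<Sum>i\<in>UNIV. mu i * P i j) = mu j)"

text \<open>R i j is the (finite-valued, [0,1]-valued) law of the one-step reward on transition i -> j.\<close>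

definition gain :: "('s::finite \<Rightarrow> 's \<Rightarrow> real) \<Rightarrow> ('s \<Rightarrow> 's \<Rightarrow> real pmf) \<Rightarrow> ('s \<Rightarrow> real) \<Rightarrow> real" where
  "gain P R mu = (\<Sum>i\<in>UNIV. mu i * (\<Sum>j\<in>UNIV. P i j * measure_pmf.expectation (R i j) (\<lambda>r. r)))"

text \<open>The grid is theta_k = th0 + k * Del for k = 0..d-1 (0-indexed version of theta_1..theta_d);
  vectors u in the prob_simplex are functions nat => real, of which only indices < d matter.\<close>

definition theta :: "real \<Rightarrow> real \<Rightarrow> nat \<Rightarrow> real" where
  "theta th0 Del k = th0 + real k * Del"

definition prob_simplex :: "nat \<Rightarrow> (nat \<Rightarrow> real) set" where
  "prob_simplex d = {u. (\<forall>k<d. 0 \<le> u k) \<and> (\<Sum>k<d. u k) = 1}"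

definition proj_dirac :: "real \<Rightarrow> real \<Rightarrow> nat \<Rightarrow> real \<Rightarrow> nat \<Rightarrow> real" where
  "proj_dirac th0 Del d x k =
    (let \<theta> = theta th0 Del in
     if x \<le> \<theta> 0 then (if k = 0 then 1 else 0)
     else if \<theta> (d - 1) \<le> x then (if k = d - 1 then 1 else 0)
     else if \<theta> k \<le> x \<and> x \<le> \<theta> (k + 1) then (\<theta> (k + 1) - x) / Del
     else if 1 \<le> k \<and> \<theta> (k - 1) \<le> x \<and> x \<le> \<theta> k then (x - \<theta> (k - 1)) / Del
     else 0)"

definition cat_proj :: "real \<Rightarrow> real \<Rightarrow> nat \<Rightarrow> real pmf \<Rightarrow> nat \<Rightarrow> real" where
  "cat_proj th0 Del d \<eta> k = measure_pmf.expectation \<eta> (\<lambda>x. proj_dirac th0 Del d x k)"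

text \<open>G_g(p)_i: coefficients of Pi_C (sum_j P_ij (nu^(g)_ij * eta^{p_j,0})). The law
  nu^(g)_ij * eta^{p_j,0} is the mixture over k' (weights p_j k') of the law of
  R_ij - g + theta_k', so by linearity of the projection:\<close>

definition Gop :: "real \<Rightarrow> real \<Rightarrow> nat \<Rightarrow> ('s::finite \<Rightarrow> 's \<Rightarrow> real) \<Rightarrow> ('s \<Rightarrow> 's \<Rightarrow> real pmf)
    \<Rightarrow> real \<Rightarrow> ('s \<Rightarrow> nat \<Rightarrow> real) \<Rightarrow> 's \<Rightarrow> nat \<Rightarrow> real" where
  "Gop th0 Del d P R g p i k =
     (\<Sum>j\<in>UNIV. P i j * (\<Sum>k'<d. p j k' *
        cat_proj th0 Del d (map_pmf (\<lambda>r. r - g + theta th0 Del k') (R i j)) k))"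

definition hop :: "real \<Rightarrow> real \<Rightarrow> nat \<Rightarrow> ('s::finite \<Rightarrow> 's \<Rightarrow> real) \<Rightarrow> ('s \<Rightarrow> 's \<Rightarrow> real pmf)
    \<Rightarrow> ('s \<Rightarrow> real) \<Rightarrow> real \<Rightarrow> ('s \<Rightarrow> nat \<Rightarrow> real) \<Rightarrow> 's \<Rightarrow> nat \<Rightarrow> real" where
  "hop th0 Del d P R mu g p i k = (1 - mu i) * p i k + mu i * Gop th0 Del d P R g p i k"

definition cdfF :: "(nat \<Rightarrow> real) \<Rightarrow> nat \<Rightarrow> real" where
  "cdfF u k = (\<Sum>j\<le>k. u j)"

definition cramer :: "real \<Rightarrow> nat \<Rightarrow> (nat \<Rightarrow> real) \<Rightarrow> (nat \<Rightarrow> real) \<Rightarrow> real" where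
  "cramer Del d u v = sqrt (Del * (\<Sum>k<d - 1. (cdfF u k - cdfF v k)^2))"

definition cramer_inf :: "real \<Rightarrow> nat \<Rightarrow> ('s::finite \<Rightarrow> nat \<Rightarrow> real) \<Rightarrow> ('s \<Rightarrow> nat \<Rightarrow> real) \<Rightarrow> real" where
  "cramer_inf Del d p q = Max (range (\<lambda>i. cramer Del d (p i) (q i)))"

definition dlam :: "real \<Rightarrow> nat \<Rightarrow> real \<Rightarrow> ('s::finite \<Rightarrow> nat \<Rightarrow> real) \<times> real
     \<Rightarrow> ('s \<Rightarrow> nat \<Rightarrow> real) \<times> real \<Rightarrow> real" where
  "dlam Del d lam pg qg' = cramer_inf Del d (fst pg) (fst qg') + lam * \<bar>snd pg - snd qg'\<bar>"

end

theory Submission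
  imports Defs
begin

(* Write G_g for the operator with offset g, so that G = G_r for the gain r. Since
  h_i = p_i + mu_i (G_g(p)_i - p_i) and the CDF is linear, the Cramer distance from p_i to h_i
  is exactly mu_i times the one from p_i to G_g(p)_i, and the triangle inequality gives
  mu_i l(p_i, G(p)_i) <= l(p_i, h_i) + l(G_g(p)_i, G(p)_i).
  Changing the offset from g to r translates every atom by r - g. In grid units the CDF of the
  projected Dirac at x is k + 1 - (x - th0)/Del clamped to [0,1], so translating the Dirac by s
  changes these CDF values by at most (s/Del)^2 in total squared difference; by convexity of the
  square the bound survives mixing over rewards, atoms and successor states. Hence
  l(G_g(p)_i, G(p)_i) <= |g - r| / sqrt Del <= lam |g - r|. *)

definition clamp :: "real \<Rightarrow> real" where
  "clamp t = max 0 (min 1 t)"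

lemma clamp_eq_diff_max: "clamp t = max 0 t - max 0 (t - 1)"
  by (simp add: clamp_def max_def min_def)

lemma sum_sq_clamp_shift_le:
  fixes z z' :: real
  assumes "z' \<le> z"
  shows "(\<Sum>k<n. (clamp (real k + 1 - z') - clamp (real k + 1 - z))^2) \<le> (z - z')^2"
proof -
  define f where "f k = max 0 (real k - z') - max 0 (real k - z)" for k :: nat
  have incr: "clamp (real k + 1 - z') - clamp (real k + 1 - z) = f (Suc k) - f k" for k
    unfolding f_def clamp_eq_diff_max by (simp add: algebra_simps)
  have incr_bounds: "0 \<le> f (Suc k) - f k" "f (Suc k) - f k \<le> z - z'" for k
    using assms unfolding incr[symmetric] clamp_def by auto
  have "(\<Sum>k<n. (f (Suc k) - f k)^2) \<le> (\<Sum>k<n. (z - z') * (f (Suc k) - f k))"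
    by (rule sum_mono) (use incr_bounds in \<open>simp add: power2_eq_square mult_right_mono\<close>)
  also have "\<dots> = (z - z') * (f n - f 0)"
    by (simp add: sum_distrib_left[symmetric] sum_lessThan_telescope)
  also have "\<dots> \<le> (z - z') * (z - z')"
    by (rule mult_left_mono) (use assms in \<open>auto simp: f_def\<close>)
  finally show ?thesis
    by (simp add: incr power2_eq_square)
qed

lemma sq_weighted_sum_le:
  fixes w f :: "'a \<Rightarrow> real"
  assumes "\<And>a. a \<in> A \<Longrightarrow> 0 \<le> w a" and "sum w A \<le> 1"
  shows "(\<Sum>a\<in>A. w a * f a)^2 \<le> (\<Sum>a\<in>A. w a * (f a)^2)"
proof -
  define m where "m = (\<Sum>a\<in>A. w a * f a)"
  have "0 \<le> (\<Sum>a\<in>A. w a * (f a - m)^2)"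
    by (rule sum_nonneg) (simp add: assms(1))
  also have "\<dots> = (\<Sum>a\<in>A. w a * (f a)^2) - 2 * m * m + m^2 * sum w A"
    by (simp add: m_def power2_diff algebra_simps sum.distrib sum_subtractf
        sum_distrib_left sum_distrib_right)
  finally have "m^2 * (2 - sum w A) \<le> (\<Sum>a\<in>A. w a * (f a)^2)"
    by (simp add: algebra_simps power2_eq_square)
  moreover have "m^2 \<le> m^2 * (2 - sum w A)"
    using assms(2) by (simp add: mult_le_cancel_left1)
  ultimately show ?thesis
    unfolding m_def by linarith
qed

lemma sum_sq_weighted_sum_le:
  fixes w :: "'a \<Rightarrow> real" and f :: "'a \<Rightarrow> 'b \<Rightarrow> real"
  assumes "finite A" and "\<And>a. a \<in> A \<Longrightarrow> 0 \<le> w a" and "sum w A \<le> 1" and "0 \<le> B"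
    and "\<And>a. a \<in> A \<Longrightarrow> (\<Sum>k\<in>K. (f a k)^2) \<le> B"
  shows "(\<Sum>k\<in>K. (\<Sum>a\<in>A. w a * f a k)^2) \<le> B"
proof -
  have "(\<Sum>k\<in>K. (\<Sum>a\<in>A. w a * f a k)^2) \<le> (\<Sum>k\<in>K. \<Sum>a\<in>A. w a * (f a k)^2)"
    by (rule sum_mono) (rule sq_weighted_sum_le[OF assms(2,3)])
  also have "\<dots> = (\<Sum>a\<in>A. w a * (\<Sum>k\<in>K. (f a k)^2))"
    by (simp add: sum_distrib_left sum.swap[of _ K])
  also have "\<dots> \<le> (\<Sum>a\<in>A. w a * B)"
    by (rule sum_mono) (simp add: assms(2,5) mult_left_mono)
  also have "\<dots> \<le> B"
    using assms(3,4) mult_right_mono[of "sum w A" 1 B] by (simp add: sum_distrib_right[symmetric])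
  finally show ?thesis .
qed

lemma cdfF_sum:
  assumes "finite A"
  shows "cdfF (\<lambda>k. \<Sum>j\<in>A. a j * v j k) k = (\<Sum>j\<in>A. a j * cdfF (v j) k)"
  unfolding cdfF_def by (simp add: sum_distrib_left sum.swap[of _ A])

lemma cramer_eq_L2_set:
  assumes "Del > 0"
  shows "cramer Del d u v = sqrt Del * L2_set (\<lambda>k. cdfF u k - cdfF v k) {..<d - 1}"
  using assms by (simp add: cramer_def L2_set_def real_sqrt_mult)

lemma cramer_nonneg: "Del > 0 \<Longrightarrow> 0 \<le> cramer Del d u v"
  by (simp add: cramer_eq_L2_set)

lemma cramer_triangle:
  assumes "Del > 0"
  shows "cramer Del d u w \<le> cramer Del d u v + cramer Del d v w"
proof -
  have "L2_set (\<lambda>k. cdfF u k - cdfF w k) {..<d - 1}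
     \<le> L2_set (\<lambda>k. cdfF u k - cdfF v k) {..<d - 1} + L2_set (\<lambda>k. cdfF v k - cdfF w k) {..<d - 1}"
    using L2_set_triangle_ineq[of "\<lambda>k. cdfF u k - cdfF v k" "\<lambda>k. cdfF v k - cdfF w k"] by simp
  then show ?thesis
    unfolding cramer_eq_L2_set[OF assms] distrib_left[symmetric]
    using assms by (simp add: mult_left_mono)
qed

lemma cramer_le_cramer_inf:
  fixes p q :: "'s::finite \<Rightarrow> nat \<Rightarrow> real"
  shows "cramer Del d (p i) (q i) \<le> cramer_inf Del d p q"
  unfolding cramer_inf_def by (rule Max_ge) auto

lemma cramer_inf_attained:
  fixes p q :: "'s::finite \<Rightarrow> nat \<Rightarrow> real"
  obtains i where "cramer_inf Del d p q = cramer Del d (p i) (q i)"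
proof -
  have "cramer_inf Del d p q \<in> range (\<lambda>i. cramer Del d (p i) (q i))"
    unfolding cramer_inf_def by (rule Max_in) auto
  then show ?thesis
    using that by blast
qed

lemma cramer_inf_nonneg:
  fixes p q :: "'s::finite \<Rightarrow> nat \<Rightarrow> real"
  shows "Del > 0 \<Longrightarrow> 0 \<le> cramer_inf Del d p q"
  using cramer_nonneg cramer_le_cramer_inf order_trans by metis

lemma proj_dirac_rescaled:
  assumes "Del > 0"
  shows "proj_dirac th0 Del d x k =
    (let z = (x - th0) / Del in
     if z \<le> 0 then (if k = 0 then 1 else 0)
     else if real (d - 1) \<le> z then (if k = d - 1 then 1 else 0)
     else if real k \<le> z \<and> z \<le> real k + 1 then real k + 1 - z
     else if 1 \<le> k \<and> real k - 1 \<le> z \<and> z \<le> real k then z - (real k - 1)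
     else 0)"
proof -
  define z where "z = (x - th0) / Del"
  have x: "x = th0 + z * Del"
    using assms unfolding z_def by (simp add: field_simps)
  have le_iff: "(th0 + a * Del \<le> th0 + z * Del) = (a \<le> z)"
    "(th0 + z * Del \<le> th0 + a * Del) = (z \<le> a)" for a :: real
    using assms by simp_all
  have div_eq: "(th0 + a * Del - (th0 + z * Del)) / Del = a - z"
    "(th0 + z * Del - (th0 + a * Del)) / Del = z - a" for a :: real
    using assms by (simp_all add: field_simps)
  show ?thesis
    unfolding z_def[symmetric] unfolding x proj_dirac_def theta_def Let_def le_iff div_eq
    by (cases k) (auto simp: of_nat_diff)
qed

lemma proj_dirac_0:
  assumes "Del > 0" and "0 < d - 1"
  shows "proj_dirac th0 Del d x 0 = clamp (1 - (x - th0) / Del)"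
proof -
  have "real (d - 1) \<ge> 1"
    using assms(2) by simp
  then show ?thesis
    using assms(2) unfolding proj_dirac_rescaled[OF assms(1)] Let_def clamp_def by auto
qed

lemma proj_dirac_Suc:
  assumes "Del > 0" and "Suc k < d - 1"
  shows "proj_dirac th0 Del d x (Suc k) =
    clamp (real k + 2 - (x - th0) / Del) - clamp (real k + 1 - (x - th0) / Del)"
proof -
  have "real (d - 1) \<ge> real k + 2"
    using assms(2) by linarith
  then show ?thesis
    using assms(2) unfolding proj_dirac_rescaled[OF assms(1)] Let_def clamp_def by auto
qed

lemma cdfF_proj_dirac:
  assumes "Del > 0" and "k < d - 1"
  shows "cdfF (proj_dirac th0 Del d x) k = clamp (real k + 1 - (x - th0) / Del)"
  using assms(2)
proof (induction k)
  case 0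
  then show ?case
    using proj_dirac_0[OF assms(1)] by (simp add: cdfF_def)
next
  case (Suc k)
  then have "cdfF (proj_dirac th0 Del d x) (Suc k)
      = clamp (real k + 1 - (x - th0) / Del) + proj_dirac th0 Del d x (Suc k)"
    by (simp add: cdfF_def)
  then show ?case
    using proj_dirac_Suc[OF assms(1) Suc.prems] by (simp add: algebra_simps)
qed

lemma sum_sq_cdfF_proj_dirac_diff_le:
  assumes "Del > 0"
  shows "(\<Sum>k<d - 1. (cdfF (proj_dirac th0 Del d x) k - cdfF (proj_dirac th0 Del d y) k)^2)
     \<le> ((x - y) / Del)^2"
proof -
  define zx zy where "zx = (x - th0) / Del" and "zy = (y - th0) / Del"
  have "(x - y) / Del = zx - zy"
    unfolding zx_def zy_def by (simp add: diff_divide_distrib)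
  moreover have "(\<Sum>k<d - 1. (cdfF (proj_dirac th0 Del d x) k - cdfF (proj_dirac th0 Del d y) k)^2)
      = (\<Sum>k<d - 1. (clamp (real k + 1 - zy) - clamp (real k + 1 - zx))^2)"
    by (rule sum.cong) (auto simp: cdfF_proj_dirac[OF assms] zx_def zy_def power2_commute)
  moreover have "\<dots> \<le> (zx - zy)^2"
    using sum_sq_clamp_shift_le[of zy zx] sum_sq_clamp_shift_le[of zx zy]
    by (cases "zy \<le> zx") (simp_all add: power2_commute)
  ultimately show ?thesis
    by simp
qed

lemma cdfF_cat_proj_map_pmf:
  assumes "finite (set_pmf M)"
  shows "cdfF (cat_proj th0 Del d (map_pmf f M)) k
    = (\<Sum>r\<in>set_pmf M. pmf M r * cdfF (proj_dirac th0 Del d (f r)) k)"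
proof -
  have "cat_proj th0 Del d (map_pmf f M)
      = (\<lambda>k. \<Sum>r\<in>set_pmf M. pmf M r * proj_dirac th0 Del d (f r) k)"
    unfolding cat_proj_def by (auto simp: integral_measure_pmf_real[OF assms] mult.commute)
  then show ?thesis
    by (simp add: cdfF_sum[OF assms])
qed

lemma sum_sq_cdfF_cat_proj_translate_le:
  assumes "Del > 0" and "finite (set_pmf M)" and "\<And>r. f r - f' r = c"
  shows "(\<Sum>k<d - 1. (cdfF (cat_proj th0 Del d (map_pmf f M)) k
                     - cdfF (cat_proj th0 Del d (map_pmf f' M)) k)^2) \<le> (c / Del)^2"
  unfolding cdfF_cat_proj_map_pmf[OF assms(2)] sum_subtractf[symmetric] right_diff_distrib[symmetric]
proof (rule sum_sq_weighted_sum_le)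
  show "sum (pmf M) (set_pmf M) \<le> 1"
    using sum_pmf_eq_1[OF assms(2)] by simp
  show "(\<Sum>k<d - 1. (cdfF (proj_dirac th0 Del d (f r)) k - cdfF (proj_dirac th0 Del d (f' r)) k)^2)
      \<le> (c / Del)^2" for r
    using sum_sq_cdfF_proj_dirac_diff_le[OF assms(1), of th0 d "f r" "f' r"] assms(3) by simp
qed (simp_all add: assms(2))

lemma cdfF_Gop:
  fixes P :: "'s::finite \<Rightarrow> 's \<Rightarrow> real"
  shows "cdfF (Gop th0 Del d P R g p i) k = (\<Sum>j\<in>UNIV. P i j * (\<Sum>k'<d. p j k' *
     cdfF (cat_proj th0 Del d (map_pmf (\<lambda>r. r - g + theta th0 Del k') (R i j))) k))"
  unfolding Gop_def[abs_def] by (simp add: cdfF_sum)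

lemma cramer_Gop_offset_le:
  fixes P :: "'s::finite \<Rightarrow> 's \<Rightarrow> real"
  assumes "stochastic_matrix P" and "\<And>i j. finite (set_pmf (R i j))"
    and "Del > 0" and "\<And>j. p j \<in> prob_simplex d"
  shows "cramer Del d (Gop th0 Del d P R g p i) (Gop th0 Del d P R g' p i) \<le> \<bar>g - g'\<bar> / sqrt Del"
proof -
  let ?C = "\<lambda>g j k' k. cdfF (cat_proj th0 Del d (map_pmf (\<lambda>r. r - g + theta th0 Del k') (R i j))) k"
  have "(\<Sum>k<d - 1. (cdfF (Gop th0 Del d P R g p i) k - cdfF (Gop th0 Del d P R g' p i) k)^2)
      = (\<Sum>k<d - 1. (\<Sum>j\<in>UNIV. P i j * (\<Sum>k'<d. p j k' * (?C g j k' k - ?C g' j k' k)))^2)"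
    by (simp only: cdfF_Gop sum_subtractf[symmetric] right_diff_distrib[symmetric])
  also have "\<dots> \<le> ((g' - g) / Del)^2"
  proof (rule sum_sq_weighted_sum_le)
    fix j
    show "(\<Sum>k<d - 1. (\<Sum>k'<d. p j k' * (?C g j k' k - ?C g' j k' k))^2) \<le> ((g' - g) / Del)^2"
    proof (rule sum_sq_weighted_sum_le)
      show "(\<Sum>k<d - 1. (?C g j k' k - ?C g' j k' k)^2) \<le> ((g' - g) / Del)^2" for k'
        by (rule sum_sq_cdfF_cat_proj_translate_le[OF assms(3,2)]) simp
    qed (use assms(4)[of j] in \<open>auto simp: prob_simplex_def\<close>)
  qed (use assms(1) in \<open>auto simp: stochastic_matrix_def\<close>)
  finally have "cramer Del d (Gop th0 Del d P R g p i) (Gop th0 Del d P R g' p i)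
      \<le> sqrt (Del * ((g' - g) / Del)^2)"
    unfolding cramer_def using assms(3) by (simp add: mult_left_mono)
  also have "\<dots> = sqrt ((\<bar>g - g'\<bar> / sqrt Del)^2)"
    using assms(3) by (simp add: power_divide power2_abs power2_eq_square field_simps)
  also have "\<dots> = \<bar>g - g'\<bar> / sqrt Del"
    using assms(3) by simp
  finally show ?thesis .
qed

lemma cdfF_hop:
  "cdfF (hop th0 Del d P R mu g p i) k
    = (1 - mu i) * cdfF (p i) k + mu i * cdfF (Gop th0 Del d P R g p i) k"
  unfolding cdfF_def hop_def by (simp add: sum.distrib sum_distrib_left)

lemma cramer_hop:
  assumes "Del > 0" and "0 \<le> mu i"
  shows "cramer Del d (p i) (hop th0 Del d P R mu g p i)
    = mu i * cramer Del d (p i) (Gop th0 Del d P R g p i)"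
proof -
  have "cdfF (p i) k - cdfF (hop th0 Del d P R mu g p i) k
      = mu i * (cdfF (p i) k - cdfF (Gop th0 Del d P R g p i) k)" for k
    by (simp add: cdfF_hop algebra_simps)
  then show ?thesis
    unfolding cramer_eq_L2_set[OF assms(1)] by (simp add: L2_set_right_distrib[OF assms(2), symmetric])
qed

lemma cramer_Gop_weighted_le_cramer_hop:
  fixes P :: "'s::finite \<Rightarrow> 's \<Rightarrow> real"
  assumes "stochastic_matrix P" and "\<And>i j. finite (set_pmf (R i j))"
    and "Del > 0" and "\<And>j. p j \<in> prob_simplex d" and "0 \<le> mu i" and "mu i \<le> 1"
  shows "mu i * cramer Del d (p i) (Gop th0 Del d P R r p i)
    \<le> cramer Del d (p i) (hop th0 Del d P R mu g p i) + \<bar>g - r\<bar> / sqrt Del"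
proof -
  let ?Gg = "Gop th0 Del d P R g p i" and ?Gr = "Gop th0 Del d P R r p i"
  have "mu i * cramer Del d (p i) ?Gr \<le> mu i * (cramer Del d (p i) ?Gg + cramer Del d ?Gg ?Gr)"
    by (rule mult_left_mono[OF cramer_triangle[OF assms(3)] assms(5)])
  also have "\<dots> = cramer Del d (p i) (hop th0 Del d P R mu g p i) + mu i * cramer Del d ?Gg ?Gr"
    by (simp add: cramer_hop[where mu = mu and i = i, OF assms(3,5)] distrib_left)
  also have "mu i * cramer Del d ?Gg ?Gr \<le> cramer Del d ?Gg ?Gr"
    using assms(6) cramer_nonneg[OF assms(3)] mult_right_mono[of "mu i" 1] by fastforce
  also have "cramer Del d ?Gg ?Gr \<le> \<bar>g - r\<bar> / sqrt Del"
    by (rule cramer_Gop_offset_le[OF assms(1-4)])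
  finally show ?thesis
    by simp
qed

lemma stationary_dist_bounds:
  fixes mu :: "'s::finite \<Rightarrow> real"
  assumes "stationary_dist P mu"
  shows "0 \<le> mu i" and "mu i \<le> 1"
proof -
  show nonneg: "0 \<le> mu i" for i
    using assms by (simp add: stationary_dist_def)
  have "mu i \<le> (\<Sum>j\<in>UNIV. mu j)"
    by (rule member_le_sum) (auto simp: nonneg)
  then show "mu i \<le> 1"
    using assms by (simp add: stationary_dist_def)
qed

theorem corollary3:
  fixes P :: "'s::finite \<Rightarrow> 's \<Rightarrow> real"
    and R :: "'s \<Rightarrow> 's \<Rightarrow> real pmf"
    and mu :: "'s \<Rightarrow> real"
    and th0 Del lam g :: real
    and d :: nat
    and p :: "'s \<Rightarrow> nat \<Rightarrow> real"
  assumes "stochastic_matrix P"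
    and "irreducible_matrix P"
    and "aperiodic_matrix P"
    and "stationary_dist P mu"
    and "\<And>i j. finite (set_pmf (R i j)) \<and> set_pmf (R i j) \<subseteq> {0..1}"
    and "Del > 0"
    and "lam \<ge> 1 / sqrt Del"
    and "\<And>i. p i \<in> prob_simplex d"
    and "g \<in> {0..1}"
  shows "Min (range mu) * cramer_inf Del d p (Gop th0 Del d P R (gain P R mu) p)
           \<le> dlam Del d lam (p, g) (hop th0 Del d P R mu g p, gain P R mu)
         \<and> \<bar>g - gain P R mu\<bar>
           \<le> dlam Del d lam (p, g) (hop th0 Del d P R mu g p, gain P R mu) / lam"
proof -
  define r G h where "r = gain P R mu" and "G = Gop th0 Del d P R r p"
    and "h = hop th0 Del d P R mu g p"
  have dlam_eq: "dlam Del d lam (p, g) (h, r) = cramer_inf Del d p h + lam * \<bar>g - r\<bar>"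
    by (simp add: dlam_def)
  have "0 < 1 / sqrt Del"
    using assms(6) by simp
  then have lam_pos: "lam > 0"
    using assms(7) by linarith
  have offset_le: "\<bar>g - r\<bar> / sqrt Del \<le> lam * \<bar>g - r\<bar>"
    using mult_right_mono[OF assms(7) abs_ge_zero, of "g - r"] by simp
  obtain i where i: "cramer_inf Del d p G = cramer Del d (p i) (G i)"
    by (rule cramer_inf_attained)
  have "Min (range mu) * cramer_inf Del d p G \<le> mu i * cramer Del d (p i) (G i)"
    unfolding i by (intro mult_right_mono cramer_nonneg[OF assms(6)] Min_le) auto
  also have "\<dots> \<le> cramer Del d (p i) (h i) + \<bar>g - r\<bar> / sqrt Del"
    unfolding G_def h_def using assms(1,5,6,8) stationary_dist_bounds[OF assms(4)]
    by (intro cramer_Gop_weighted_le_cramer_hop) auto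
  also have "\<dots> \<le> dlam Del d lam (p, g) (h, r)"
    unfolding dlam_eq using cramer_le_cramer_inf offset_le by (rule add_mono)
  finally have "Min (range mu) * cramer_inf Del d p G \<le> dlam Del d lam (p, g) (h, r)" .
  moreover have "\<bar>g - r\<bar> \<le> dlam Del d lam (p, g) (h, r) / lam"
    using lam_pos cramer_inf_nonneg[OF assms(6), of d p h] by (simp add: dlam_eq pos_le_divide_eq)
  ultimately show ?thesis
    by (simp add: r_def G_def h_def)
qed

end
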